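(* Let $r$ be a constant positive integer and $\varepsilon>0$ a constant. For each $n$, let $L(r,m)=(A\cup B,E)$ be a connected bipartite graph on $m=m(n)$ vertices with bipartition $(A,B)$ such that every vertex in $A$ has at most $r$ neighbors in $B$. If $m=O(n^{1-\varepsilon})$, then $$\lim_{n\to\infty}\frac{\log M_{L(r,m)}(n)}{\binom{n}{2}}=1.$$
   Context: Logarithms are base 2. For graphs $G,G'$ on the same vertex set $[n]$, their symmetric difference $G\oplus G'$ is the graph on $[n]$ whose edge set consists of all edges belonging to exactly one of $G,G'$. For a graph $L$, $M_{L}(n)$ denotes the maximum possible size of a family $\mathcal{G}$ of graphs on vertex set $[n]$ such that for any two distinct $G,G'\in\mathcal{G}$, $G\oplus G'$ contains $L$ as a subgraph. *)

theory Defs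
  imports Complex_Main "HOL-Library.Landau_Symbols"
begin

text \<open>Graphs on vertex set [n] = {1..n} are represented by their edge sets:
  sets of 2-element subsets of {1..n}.\<close>

definition all_edges :: "nat \<Rightarrow> nat set set" where
  "all_edges n = {e. e \<subseteq> {1..n} \<and> card e = 2}"

definition graph_on :: "nat set \<Rightarrow> nat set set \<Rightarrow> bool" where
  "graph_on V E \<longleftrightarrow> E \<subseteq> {e. e \<subseteq> V \<and> card e = 2}"

definition sym_diff :: "nat set set \<Rightarrow> nat set set \<Rightarrow> nat set set" where
  "sym_diff G G' = (G - G') \<union> (G' - G)"

text \<open>The graph L has vertex set {0..<m} and edge set LE.
  G contains L as a subgraph: an injective vertex map sending edges to edges.\<close>
definition contains_subgraph :: "nat set set \<Rightarrow> nat \<Rightarrow> nat \<Rightarrow> nat set set \<Rightarrow> bool" where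
  "contains_subgraph G n m LE \<longleftrightarrow>
     (\<exists>f. inj_on f {0..<m} \<and> f ` {0..<m} \<subseteq> {1..n} \<and> (\<forall>e\<in>LE. f ` e \<in> G))"

definition M_L :: "nat set set \<Rightarrow> nat \<Rightarrow> nat \<Rightarrow> nat" where
  "M_L LE m n = Max {card F | F. F \<subseteq> Pow (all_edges n) \<and>
      (\<forall>G\<in>F. \<forall>G'\<in>F. G \<noteq> G' \<longrightarrow> contains_subgraph (sym_diff G G') n m LE)}"

definition connected_graph :: "nat set \<Rightarrow> nat set set \<Rightarrow> bool" where
  "connected_graph V E \<longleftrightarrow> V \<noteq> {} \<and>
     (\<forall>u\<in>V. \<forall>v\<in>V. (\<lambda>x y. {x, y} \<in> E)\<^sup>*\<^sup>* u v)"

definition bipartition :: "nat set \<Rightarrow> nat set set \<Rightarrow> nat set \<Rightarrow> nat set \<Rightarrow> bool" where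
  "bipartition V E A B \<longleftrightarrow> A \<union> B = V \<and> A \<inter> B = {} \<and>
     (\<forall>e\<in>E. card (e \<inter> A) = 1 \<and> card (e \<inter> B) = 1)"

end

theory Submission
  imports Defs "HOL-Real_Asymp.Real_Asymp"
begin

text \<open>
  Write N = n choose 2 and M = M_L(n). The upper bound M \<le> 2^N is trivial. For the lower bound, a
  family of maximum size is maximal, so every graph on [n] is G \<oplus> Y with G in the family and Y
  empty or free of copies of L; hence 2^N \<le> M (b + 1), where b counts the L-free graphs.

  L-free graphs are sparse, by dependent random choice: if H has at least \<alpha> N edges, averaging
  over all t-tuples of vertices, t = \<lceil>r / \<epsilon>\<rceil>, gives a tuple whose common neighbourhood
  still has m vertices after deleting one vertex from every set of at most r vertices with fewer
  than m common neighbours; m = O(n^(1 - \<epsilon>)) is what makes the deleted part negligible. The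
  side B of L is embedded into this set, and then each vertex of A into an unused common
  neighbour of the images of its at most r neighbours.

  Counting edge sets of size below \<alpha> N gives b + 1 \<le> 2 (e / \<alpha>)^(\<alpha> N), so
  log M / N \<ge> 1 - 1/N - \<alpha> log (e / \<alpha>), and letting \<alpha> \<rightarrow> 0 proves the limit.
\<close>

section \<open>Embedding a bipartite graph into a rich set\<close>

definition common_nbhd :: "nat set set \<Rightarrow> nat set \<Rightarrow> nat set \<Rightarrow> nat set" where
  "common_nbhd H V S = {v\<in>V. \<forall>s\<in>S. {s, v} \<in> H}"

lemma common_nbhd_subset: "common_nbhd H V S \<subseteq> V"
  unfolding common_nbhd_def by blast

lemma common_nbhd_empty [simp]: "common_nbhd H V {} = V"
  unfolding common_nbhd_def by blast

definition rich_subset :: "nat set set \<Rightarrow> nat set \<Rightarrow> nat \<Rightarrow> nat \<Rightarrow> nat set \<Rightarrow> bool" where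
  "rich_subset H V r m U \<longleftrightarrow> (\<forall>S\<subseteq>U. card S \<le> r \<longrightarrow> m \<le> card (common_nbhd H V S))"

lemma subset_common_nbhd_swap:
  assumes "X \<subseteq> V" "S \<subseteq> V"
  shows "S \<subseteq> common_nbhd H V X \<longleftrightarrow> X \<subseteq> common_nbhd H V S"
  using assms unfolding common_nbhd_def by (fastforce simp: subset_iff insert_commute)

lemma bipartite_partial_embedding:
  assumes "finite A0" "A0 \<subseteq> A" "A \<inter> B = {}" "finite A" "finite B" "card (A \<union> B) \<le> m"
    and "finite U" "U \<subseteq> V" "card B \<le> card U"
    and deg: "\<And>a. a \<in> A \<Longrightarrow> card {b \<in> B. {a, b} \<in> LE} \<le> r"
    and rich: "rich_subset H V r m U"
  shows "\<exists>f. inj_on f (B \<union> A0) \<and> f ` (B \<union> A0) \<subseteq> V \<and> f ` B \<subseteq> U \<and>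
           (\<forall>a\<in>A0. \<forall>b\<in>B. {a, b} \<in> LE \<longrightarrow> {f a, f b} \<in> H)"
  using assms(1,2)
proof (induction A0 rule: finite_induct)
  case empty
  obtain g where "inj_on g B" "g ` B \<subseteq> U"
    using card_le_inj[OF \<open>finite B\<close> \<open>finite U\<close> \<open>card B \<le> card U\<close>] by blast
  then show ?case using \<open>U \<subseteq> V\<close> by (intro exI[of _ g]) auto
next
  case (insert a A0)
  then obtain f where f: "inj_on f (B \<union> A0)" "f ` (B \<union> A0) \<subseteq> V" "f ` B \<subseteq> U"
    "\<forall>a\<in>A0. \<forall>b\<in>B. {a, b} \<in> LE \<longrightarrow> {f a, f b} \<in> H" by auto
  have a: "a \<in> A" "a \<notin> B" using insert.prems \<open>A \<inter> B = {}\<close> by auto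
  define S where "S = f ` {b \<in> B. {a, b} \<in> LE}"
  have "card S \<le> r"
    unfolding S_def using card_image_le[of "{b \<in> B. {a, b} \<in> LE}" f] deg[OF a(1)] \<open>finite B\<close>
    by simp
  moreover have "S \<subseteq> U" unfolding S_def using f(3) by blast
  ultimately have m_le: "m \<le> card (common_nbhd H V S)" using rich unfolding rich_subset_def by blast
  have fin: "finite (B \<union> A0)" using \<open>finite B\<close> insert.hyps(1) by blast
  \<comment> \<open>fewer than \<open>m\<close> vertices are used so far, so some common neighbour of \<open>S\<close> is free\<close>
  have "card (f ` (B \<union> A0)) < card (A \<union> B)"
  proof -
    have "B \<union> A0 \<subset> A \<union> B" using a insert by blast
    then have "card (B \<union> A0) < card (A \<union> B)"
      using \<open>finite A\<close> \<open>finite B\<close> by (intro psubset_card_mono) auto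
    then show ?thesis using card_image_le[OF fin, of f] by linarith
  qed
  then have "\<not> common_nbhd H V S \<subseteq> f ` (B \<union> A0)"
    using m_le \<open>card (A \<union> B) \<le> m\<close> card_mono[OF finite_imageI[OF fin]] by fastforce
  then obtain v where v: "v \<in> common_nbhd H V S" "v \<notin> f ` (B \<union> A0)" by blast
  have "inj_on (f(a := v)) (B \<union> insert a A0)"
    using f(1) v(2) insert.hyps(2) a(2) by (auto simp: inj_on_def)
  moreover have "(f(a := v)) ` (B \<union> insert a A0) \<subseteq> V"
    using f(2) v(1) common_nbhd_subset by fastforce
  moreover have "(f(a := v)) ` B \<subseteq> U" using f(3) a(2) by auto
  moreover have "\<forall>a'\<in>insert a A0. \<forall>b\<in>B. {a', b} \<in> LE \<longrightarrow> {(f(a := v)) a', (f(a := v)) b} \<in> H"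
    using f(4) v(1) a(2) insert.hyps(2) unfolding S_def common_nbhd_def
    by (fastforce simp: insert_commute)
  ultimately show ?case by blast
qed

lemma contains_subgraph_if_rich_subset:
  assumes "graph_on {0..<m} LE" and bip: "bipartition {0..<m} LE A B"
    and "\<And>a. a \<in> A \<Longrightarrow> card {b \<in> B. {a, b} \<in> LE} \<le> r"
    and "U \<subseteq> {1..n}" "m \<le> card U" "rich_subset H {1..n} r m U"
  shows "contains_subgraph H n m LE"
proof -
  have AB: "A \<union> B = {0..<m}" "A \<inter> B = {}"
    and edge: "\<And>e. e \<in> LE \<Longrightarrow> card (e \<inter> A) = 1 \<and> card (e \<inter> B) = 1"
    using bip unfolding bipartition_def by auto
  then have "finite A" "finite B" "card B \<le> m"
    by (auto intro: finite_subset card_mono[of "{0..<m}", simplified])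
  moreover have "finite U" using \<open>U \<subseteq> {1..n}\<close> finite_subset by blast
  ultimately obtain f where f: "inj_on f (B \<union> A)" "f ` (B \<union> A) \<subseteq> {1..n}"
    "\<forall>a\<in>A. \<forall>b\<in>B. {a, b} \<in> LE \<longrightarrow> {f a, f b} \<in> H"
    using bipartite_partial_embedding[of A A B m U "{1..n}" LE r H] assms AB by auto
  have "f ` e \<in> H" if e: "e \<in> LE" for e
  proof -
    obtain a b where "e \<inter> A = {a}" "e \<inter> B = {b}"
      using edge[OF e] by (auto simp: card_1_singleton_iff)
    moreover have "e \<subseteq> A \<union> B" using \<open>graph_on {0..<m} LE\<close> e AB unfolding graph_on_def by auto
    ultimately have "e = {a, b}" "a \<in> A" "b \<in> B" by auto
    then show ?thesis using f(3) e by auto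
  qed
  then show ?thesis unfolding contains_subgraph_def using f AB by (metis sup_commute)
qed

section \<open>Dependent random choice\<close>

lemma sum_card_filter_swap:
  assumes "finite A" "finite B"
  shows "(\<Sum>a\<in>A. card {b\<in>B. P a b}) = (\<Sum>b\<in>B. card {a\<in>A. P a b})"
  using assms by (simp only: card_eq_sum sum.inter_filter) (rule sum.swap)

lemma sum_card_common_nbhd_lists:
  assumes "finite V"
  shows "(\<Sum>T | set T \<subseteq> V \<and> length T = t. card (common_nbhd H V (set T)))
       = (\<Sum>v\<in>V. card {s\<in>V. {s, v} \<in> H} ^ t)"
proof -
  let ?Ts = "{T. set T \<subseteq> V \<and> length T = t}"
  have "(\<Sum>T\<in>?Ts. card (common_nbhd H V (set T))) = (\<Sum>v\<in>V. card {T\<in>?Ts. \<forall>s\<in>set T. {s, v} \<in> H})"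
    unfolding common_nbhd_def using finite_lists_length_eq[OF assms] assms by (rule sum_card_filter_swap)
  also have "\<dots> = (\<Sum>v\<in>V. card {T. set T \<subseteq> {s\<in>V. {s, v} \<in> H} \<and> length T = t})"
    by (intro sum.cong arg_cong[where f = card]) auto
  finally show ?thesis using assms by (simp add: card_lists_length_eq)
qed

lemma card_lists_common_nbhd_supset:
  assumes "finite V" "S \<subseteq> V"
  shows "card {T. set T \<subseteq> V \<and> length T = t \<and> S \<subseteq> common_nbhd H V (set T)}
       = card (common_nbhd H V S) ^ t"
proof -
  have "{T. set T \<subseteq> V \<and> length T = t \<and> S \<subseteq> common_nbhd H V (set T)}
      = {T. set T \<subseteq> common_nbhd H V S \<and> length T = t}"
    using subset_common_nbhd_swap[OF _ assms(2)] common_nbhd_subset[of H V S] by blast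
  then show ?thesis
    using assms(1) by (simp add: card_lists_length_eq common_nbhd_def)
qed

lemma exists_subset_avoiding_family:
  assumes "finite \<F>"
  obtains U where "U \<subseteq> W" "card W \<le> card U + card \<F>" "\<And>S. S \<in> \<F> \<Longrightarrow> S \<noteq> {} \<Longrightarrow> \<not> S \<subseteq> U"
proof -
  define U where "U = W - (\<lambda>S. SOME x. x \<in> S) ` \<F>"
  have "card W - card ((\<lambda>S. SOME x. x \<in> S) ` \<F>) \<le> card U"
    unfolding U_def using assms by (intro diff_card_le_card_Diff) simp
  moreover have "card ((\<lambda>S. SOME x. x \<in> S) ` \<F>) \<le> card \<F>"
    using assms by (rule card_image_le)
  moreover have "\<not> S \<subseteq> U" if "S \<in> \<F>" "S \<noteq> {}" for S
    using that some_in_eq[of S] unfolding U_def by blast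
  ultimately show thesis using that[of U] unfolding U_def by fastforce
qed

lemma exists_tuple_with_few_bad_subsets:
  fixes V :: "nat set" and H :: "nat set set" and bad :: "nat set set" and m t :: nat
  assumes "finite V" "V \<noteq> {}" "\<And>S. S \<in> bad \<Longrightarrow> S \<subseteq> V \<and> card (common_nbhd H V S) \<le> m"
    and count: "card bad * m ^ t + m * card V ^ t \<le> (\<Sum>v\<in>V. card {s\<in>V. {s, v} \<in> H} ^ t)"
  obtains T where "set T \<subseteq> V"
    "card {S\<in>bad. S \<subseteq> common_nbhd H V (set T)} + m \<le> card (common_nbhd H V (set T))"
proof -
  let ?Ts = "{T. set T \<subseteq> V \<and> length T = t}"
  let ?bad_in = "\<lambda>T. {S\<in>bad. S \<subseteq> common_nbhd H V (set T)}"
  have fin_Ts: "finite ?Ts" using finite_lists_length_eq[OF \<open>finite V\<close>] .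
  have "bad \<subseteq> Pow V" using assms(3) by blast
  then have fin_bad: "finite bad" using \<open>finite V\<close> by (meson finite_Pow_iff finite_subset)
  have "(\<Sum>T\<in>?Ts. card (?bad_in T)) = (\<Sum>S\<in>bad. card {T\<in>?Ts. S \<subseteq> common_nbhd H V (set T)})"
    using fin_Ts fin_bad by (rule sum_card_filter_swap)
  also have "\<dots> \<le> (\<Sum>S\<in>bad. m ^ t)"
  proof (rule sum_mono)
    fix S assume "S \<in> bad"
    then have "S \<subseteq> V" "card (common_nbhd H V S) \<le> m" using assms(3) by auto
    then show "card {T\<in>?Ts. S \<subseteq> common_nbhd H V (set T)} \<le> m ^ t"
      using card_lists_common_nbhd_supset[OF \<open>finite V\<close>, of S t H] by (simp add: power_mono)
  qed
  finally have bad_count: "(\<Sum>T\<in>?Ts. card (?bad_in T)) \<le> card bad * m ^ t" by simp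
  obtain v where "v \<in> V" using \<open>V \<noteq> {}\<close> by blast
  then have "replicate t v \<in> ?Ts" by (simp add: set_replicate_conv_if)
  \<comment> \<open>averaging over all \<open>t\<close>-tuples: the first-moment step of dependent random choice\<close>
  have "\<exists>T\<in>?Ts. card (?bad_in T) + m \<le> card (common_nbhd H V (set T))"
  proof (rule ccontr)
    assume "\<not> ?thesis"
    then have "(\<Sum>T\<in>?Ts. card (common_nbhd H V (set T))) < (\<Sum>T\<in>?Ts. card (?bad_in T) + m)"
      using fin_Ts \<open>replicate t v \<in> ?Ts\<close> by (intro sum_strict_mono) auto
    also have "\<dots> \<le> card bad * m ^ t + m * card V ^ t"
      using bad_count \<open>finite V\<close> by (simp add: sum.distrib card_lists_length_eq)
    finally show False
      using count sum_card_common_nbhd_lists[OF \<open>finite V\<close>, where t = t and H = H] by linarith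
  qed
  then obtain T where "T \<in> ?Ts" "card (?bad_in T) + m \<le> card (common_nbhd H V (set T))" ..
  then show ?thesis using that[of T] by simp
qed

lemma dependent_random_choice:
  fixes V :: "nat set" and H :: "nat set set" and r m t :: nat
  defines "bad \<equiv> {S. S \<subseteq> V \<and> card S \<le> r \<and> card (common_nbhd H V S) < m}"
  assumes "finite V" "V \<noteq> {}"
    and "card bad * m ^ t + m * card V ^ t \<le> (\<Sum>v\<in>V. card {s\<in>V. {s, v} \<in> H} ^ t)"
  obtains U where "U \<subseteq> V" "m \<le> card U" "rich_subset H V r m U"
proof -
  have bad_small: "S \<subseteq> V \<and> card (common_nbhd H V S) \<le> m" if "S \<in> bad" for S
    using that unfolding bad_def by auto
  obtain T where "set T \<subseteq> V"
    and T: "card {S\<in>bad. S \<subseteq> common_nbhd H V (set T)} + m \<le> card (common_nbhd H V (set T))"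
    by (rule exists_tuple_with_few_bad_subsets[OF assms(2,3) bad_small assms(4)])
  define bad_in where "bad_in = {S\<in>bad. S \<subseteq> common_nbhd H V (set T)}"
  have "finite bad_in" unfolding bad_in_def bad_def using \<open>finite V\<close> by simp
  then obtain U where U: "U \<subseteq> common_nbhd H V (set T)" "card (common_nbhd H V (set T)) \<le> card U + card bad_in"
    and avoid: "\<And>S. S \<in> bad_in \<Longrightarrow> S \<noteq> {} \<Longrightarrow> \<not> S \<subseteq> U"
    using exists_subset_avoiding_family[where W = "common_nbhd H V (set T)"] by blast
  have "m \<le> card U" using U(2) T unfolding bad_in_def by linarith
  have "U \<subseteq> V" using U(1) common_nbhd_subset by blast
  moreover have "m \<le> card (common_nbhd H V S)" if "S \<subseteq> U" "card S \<le> r" for S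
  proof (cases "S = {}")
    case True
    then show ?thesis using \<open>m \<le> card U\<close> card_mono[OF \<open>finite V\<close> \<open>U \<subseteq> V\<close>] by simp
  next
    case False
    then have "S \<notin> bad" using avoid that(1) U(1) unfolding bad_in_def by blast
    moreover have "S \<subseteq> V" using that(1) \<open>U \<subseteq> V\<close> by blast
    ultimately show ?thesis using that(2) unfolding bad_def by simp
  qed
  ultimately show ?thesis using \<open>m \<le> card U\<close> that unfolding rich_subset_def by blast
qed

lemma card_nbhd_eq_card_incident_edges:
  assumes "graph_on V H" "v \<in> V"
  shows "card {s\<in>V. {s, v} \<in> H} = card {e\<in>H. v \<in> e}"
proof -
  have "(\<lambda>s. {s, v}) ` {s\<in>V. {s, v} \<in> H} = {e\<in>H. v \<in> e}"
  proof (intro equalityI subsetI)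
    fix e assume e: "e \<in> {e\<in>H. v \<in> e}"
    then have "e \<subseteq> V" "card (e - {v}) = 1"
      using assms(1) unfolding graph_on_def by auto
    then obtain s where "e - {v} = {s}" "s \<in> V" by (auto simp: card_1_singleton_iff)
    then have "e = {s, v}" "s \<in> V" using e by auto
    then show "e \<in> (\<lambda>s. {s, v}) ` {s\<in>V. {s, v} \<in> H}" using e by auto
  qed auto
  moreover have "inj_on (\<lambda>s. {s, v}) {s\<in>V. {s, v} \<in> H}"
    by (auto simp: inj_on_def doubleton_eq_iff)
  ultimately show ?thesis using card_image by fastforce
qed

lemma sum_degrees_eq_twice_card_edges:
  assumes "graph_on V H" "finite V"
  shows "(\<Sum>v\<in>V. card {s\<in>V. {s, v} \<in> H}) = 2 * card H"
proof -
  have edges: "e \<subseteq> V" "card e = 2" if "e \<in> H" for e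
    using assms(1) that unfolding graph_on_def by auto
  then have "H \<subseteq> Pow V" by blast
  then have "finite H" using assms(2) by (meson finite_Pow_iff finite_subset)
  have "(\<Sum>v\<in>V. card {s\<in>V. {s, v} \<in> H}) = (\<Sum>v\<in>V. card {e\<in>H. v \<in> e})"
    by (intro sum.cong refl card_nbhd_eq_card_incident_edges[OF assms(1)])
  also have "\<dots> = (\<Sum>e\<in>H. card {v\<in>V. v \<in> e})"
    using assms(2) \<open>finite H\<close> by (rule sum_card_filter_swap)
  also have "\<dots> = (\<Sum>e\<in>H. 2)"
  proof (rule sum.cong)
    fix e assume "e \<in> H"
    then have "{v\<in>V. v \<in> e} = e" using edges(1) by blast
    then show "card {v\<in>V. v \<in> e} = 2" using edges(2)[OF \<open>e \<in> H\<close>] by simp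
  qed simp
  finally show ?thesis by simp
qed

lemma power_sum_lower_bound:
  fixes d :: "'a \<Rightarrow> nat" and \<alpha> :: real
  assumes "finite V" "card V \<le> n" "\<And>v. v \<in> V \<Longrightarrow> d v \<le> n"
    and sum_ge: "\<alpha> * real n * (real n - 1) \<le> (\<Sum>v\<in>V. real (d v))"
    and "n \<ge> 2" "0 < \<alpha>"
  shows "(\<alpha>/4) ^ (t+1) * real n ^ (t+1) \<le> (\<Sum>v\<in>V. real (d v) ^ t)"
proof -
  \<comment> \<open>at least \<open>\<alpha> n / 4\<close> vertices have degree at least \<open>\<alpha> n / 4\<close>\<close>
  define D where "D = {v\<in>V. \<alpha>/4 * real n \<le> real (d v)}"
  have "D \<subseteq> V" unfolding D_def by blast
  then have "(\<Sum>v\<in>V. real (d v)) = (\<Sum>v\<in>D. real (d v)) + (\<Sum>v\<in>V-D. real (d v))"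
    using assms(1) by (simp add: sum.subset_diff add.commute)
  also have "\<dots> \<le> (\<Sum>v\<in>D. real n) + (\<Sum>v\<in>V-D. \<alpha>/4 * real n)"
    using assms(3) by (intro add_mono sum_mono) (auto simp: D_def)
  also have "\<dots> \<le> real (card D) * real n + real n * (\<alpha>/4 * real n)"
    using card_mono[OF assms(1), of "V - D"] assms(2,6) by (simp add: mult_right_mono)
  finally have "\<alpha> * real n * (real n - 1) \<le> real (card D) * real n + real n * (\<alpha>/4 * real n)"
    using sum_ge by linarith
  moreover have "\<alpha> * real n * (real n / 2) \<le> \<alpha> * real n * (real n - 1)"
    using assms(5,6) by (intro mult_left_mono) auto
  ultimately have "real n * (\<alpha> * real n / 4) \<le> real n * real (card D)"
    by (simp add: algebra_simps)
  then have card_D: "\<alpha> * real n / 4 \<le> real (card D)"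
    using assms(5) by simp
  have "(\<alpha>/4) ^ (t+1) * real n ^ (t+1) = (\<alpha> * real n / 4) * (\<alpha>/4 * real n) ^ t"
    by (simp add: field_simps)
  also have "\<dots> \<le> real (card D) * (\<alpha>/4 * real n) ^ t"
    using card_D assms(6) by (intro mult_right_mono) auto
  also have "\<dots> = (\<Sum>v\<in>D. (\<alpha>/4 * real n) ^ t)" by simp
  also have "\<dots> \<le> (\<Sum>v\<in>D. real (d v) ^ t)"
    using assms(6) by (intro sum_mono power_mono) (auto simp: D_def)
  also have "\<dots> \<le> (\<Sum>v\<in>V. real (d v) ^ t)"
    using assms(1) by (intro sum_mono2) (auto simp: D_def)
  finally show ?thesis .
qed

lemma card_small_subsets_le:
  assumes "finite V" "V \<noteq> {}"
  shows "card {S. S \<subseteq> V \<and> card S \<le> r} \<le> (r + 1) * card V ^ r"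
proof -
  let ?lists = "{xs. set xs \<subseteq> V \<and> length xs \<le> r}"
  have "{S. S \<subseteq> V \<and> card S \<le> r} \<subseteq> set ` ?lists"
  proof
    fix S assume S: "S \<in> {S. S \<subseteq> V \<and> card S \<le> r}"
    then obtain xs where "set xs = S" "distinct xs"
      using finite_distinct_list[OF finite_subset[OF _ assms(1)]] by blast
    then show "S \<in> set ` ?lists"
      using S distinct_card[of xs] by auto
  qed
  then have "card {S. S \<subseteq> V \<and> card S \<le> r} \<le> card (set ` ?lists)"
    using finite_lists_length_le[OF assms(1)] by (intro card_mono) auto
  also have "\<dots> \<le> card ?lists"
    using finite_lists_length_le[OF assms(1)] by (rule card_image_le)
  also have "\<dots> = (\<Sum>i\<le>r. card V ^ i)" using card_lists_length_le[OF assms(1)] .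
  also have "\<dots> \<le> (\<Sum>i\<le>r. card V ^ r)"
    using assms by (intro sum_mono power_increasing) (auto simp: Suc_le_eq card_gt_0_iff)
  finally show ?thesis by simp
qed

lemma sum_pow_card_Pow:
  fixes a :: "'b :: comm_semiring_1"
  assumes "finite E"
  shows "(\<Sum>X\<in>Pow E. a ^ card X) = (a + 1) ^ card E"
  using prod_add[OF assms, of "\<lambda>_. a" "\<lambda>_. 1"] by simp

lemma card_Pow_small_bound:
  fixes a K :: real
  assumes "finite E" "0 < a" "a \<le> 1"
  shows "real (card {X\<in>Pow E. real (card X) < K}) * a powr K \<le> exp (a * real (card E))"
proof -
  let ?small = "{X\<in>Pow E. real (card X) < K}"
  have "real (card ?small) * a powr K = (\<Sum>X\<in>?small. a powr K)" by simp
  also have "\<dots> \<le> (\<Sum>X\<in>?small. a ^ card X)"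
    using assms(2,3) by (intro sum_mono) (simp add: powr_mono' flip: powr_realpow)
  also have "\<dots> \<le> (\<Sum>X\<in>Pow E. a ^ card X)"
    using assms by (intro sum_mono2) auto
  also have "\<dots> = (a + 1) ^ card E" using sum_pow_card_Pow[OF assms(1)] .
  also have "\<dots> \<le> exp a ^ card E"
    using assms(2) by (intro power_mono) (auto simp: add.commute exp_ge_add_one_self)
  finally show ?thesis by (simp add: mult.commute flip: exp_of_nat_mult)
qed

section \<open>Families whose pairwise differences contain L\<close>

definition separating_family :: "nat set set \<Rightarrow> nat \<Rightarrow> nat \<Rightarrow> nat set set set \<Rightarrow> bool" where
  "separating_family LE m n \<F> \<longleftrightarrow>
     (\<forall>G\<in>\<F>. \<forall>G'\<in>\<F>. G \<noteq> G' \<longrightarrow> contains_subgraph (sym_diff G G') n m LE)"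

lemma finite_all_edges: "finite (all_edges n)"
proof -
  have "all_edges n \<subseteq> Pow {1..n}" unfolding all_edges_def by blast
  then show ?thesis by (rule finite_subset) simp
qed

lemma card_all_edges: "card (all_edges n) = n choose 2"
  unfolding all_edges_def using n_subsets[of "{1..n}" 2] by simp

lemma two_mult_choose_two: "2 * real (n choose 2) = real n * (real n - 1)"
proof -
  have "even (n * (n - 1))" by auto
  then have "2 * (n choose 2) = n * (n - 1)" by (simp add: choose_two)
  then have "2 * real (n choose 2) = real (n * (n - 1))" by (metis of_nat_mult of_nat_numeral)
  then show ?thesis by (cases n) (auto simp: algebra_simps)
qed

lemma graph_on_iff_subset_all_edges: "graph_on {1..n} H \<longleftrightarrow> H \<subseteq> all_edges n"
  unfolding graph_on_def all_edges_def by auto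

lemma M_L_eq_Max:
  "M_L LE m n = Max {card \<F> | \<F>. \<F> \<subseteq> Pow (all_edges n) \<and> separating_family LE m n \<F>}"
  unfolding M_L_def separating_family_def ..

lemma finite_separating_family_sizes:
  "finite {card \<F> | \<F>. \<F> \<subseteq> Pow (all_edges n) \<and> separating_family LE m n \<F>}"
proof (rule finite_subset)
  show "{card \<F> | \<F>. \<F> \<subseteq> Pow (all_edges n) \<and> separating_family LE m n \<F>}
      \<subseteq> card ` Pow (Pow (all_edges n))"
    by blast
  show "finite (card ` Pow (Pow (all_edges n)))"
    using finite_all_edges by simp
qed

lemma card_le_M_L:
  assumes "\<F> \<subseteq> Pow (all_edges n)" "separating_family LE m n \<F>"
  shows "card \<F> \<le> M_L LE m n"
  unfolding M_L_eq_Max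
  by (rule Max_ge[OF finite_separating_family_sizes]) (use assms in blast)

lemma M_L_attained:
  obtains \<F> where "\<F> \<subseteq> Pow (all_edges n)" "separating_family LE m n \<F>" "card \<F> = M_L LE m n"
proof -
  have "separating_family LE m n {}" unfolding separating_family_def by blast
  then have "card {} \<in> {card \<F> | \<F>. \<F> \<subseteq> Pow (all_edges n) \<and> separating_family LE m n \<F>}"
    by force
  then have "{card \<F> | \<F>. \<F> \<subseteq> Pow (all_edges n) \<and> separating_family LE m n \<F>} \<noteq> {}"
    by blast
  then have "M_L LE m n \<in> {card \<F> | \<F>. \<F> \<subseteq> Pow (all_edges n) \<and> separating_family LE m n \<F>}"
    unfolding M_L_eq_Max by (rule Max_in[OF finite_separating_family_sizes])
  then obtain \<F> where \<F>: "M_L LE m n = card \<F>" "\<F> \<subseteq> Pow (all_edges n)" "separating_family LE m n \<F>"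
    by blast
  show ?thesis using that[OF \<F>(2,3) \<F>(1)[symmetric]] .
qed

lemma M_L_le_two_pow: "M_L LE m n \<le> 2 ^ card (all_edges n)"
proof -
  obtain \<F> where \<F>: "\<F> \<subseteq> Pow (all_edges n)" "separating_family LE m n \<F>" "card \<F> = M_L LE m n"
    by (rule M_L_attained)
  then have "card \<F> \<le> card (Pow (all_edges n))"
    by (intro card_mono) (simp_all add: finite_all_edges)
  then show ?thesis using \<F>(3) by (simp add: card_Pow finite_all_edges)
qed

lemma M_L_pos: "0 < M_L LE m n"
proof -
  have "separating_family LE m n {{}}" unfolding separating_family_def by blast
  then show ?thesis using card_le_M_L[of "{{}}" n LE m] by simp
qed

lemma sym_diff_commute: "sym_diff G G' = sym_diff G' G"
  unfolding sym_diff_def by blast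

lemma maximum_separating_family_covers:
  assumes "\<F> \<subseteq> Pow (all_edges n)" "separating_family LE m n \<F>" "card \<F> = M_L LE m n"
    and "X \<subseteq> all_edges n"
  obtains G Y where "G \<in> \<F>" "X = sym_diff G Y"
    "Y = {} \<or> Y \<subseteq> all_edges n \<and> \<not> contains_subgraph Y n m LE"
proof (cases "X \<in> \<F>")
  case True
  then show ?thesis using that[of X "{}"] by (simp add: sym_diff_def)
next
  case False
  have "finite \<F>" using assms(1) finite_all_edges by (meson finite_Pow_iff finite_subset)
  then have "card (insert X \<F>) > M_L LE m n" using False assms(3) by simp
  then have "\<not> separating_family LE m n (insert X \<F>)"
    using card_le_M_L[of "insert X \<F>"] assms(1,4) by fastforce
  then obtain G G' where "G \<in> insert X \<F>" "G' \<in> insert X \<F>" "G \<noteq> G'"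
    and "\<not> contains_subgraph (sym_diff G G') n m LE"
    unfolding separating_family_def by blast
  then obtain G where "G \<in> \<F>" and G: "\<not> contains_subgraph (sym_diff X G) n m LE"
    using assms(2) sym_diff_commute unfolding separating_family_def by (metis insertE)
  moreover have "X = sym_diff G (sym_diff X G)" "sym_diff X G \<subseteq> all_edges n"
    using assms(1,4) \<open>G \<in> \<F>\<close> unfolding sym_diff_def by auto
  ultimately show ?thesis using that by blast
qed

lemma two_pow_le_M_L_mult:
  "2 ^ card (all_edges n)
     \<le> M_L LE m n * (card {X \<in> Pow (all_edges n). \<not> contains_subgraph X n m LE} + 1)"
proof -
  let ?bad = "{X \<in> Pow (all_edges n). \<not> contains_subgraph X n m LE}"
  obtain \<F> where \<F>: "\<F> \<subseteq> Pow (all_edges n)" "separating_family LE m n \<F>" "card \<F> = M_L LE m n"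
    by (rule M_L_attained)
  have fin: "finite \<F>" "finite ?bad"
    using \<F>(1) finite_all_edges by (auto intro: finite_subset)
  have "Pow (all_edges n) \<subseteq> (\<lambda>(G, Y). sym_diff G Y) ` (\<F> \<times> insert {} ?bad)"
  proof
    fix X assume "X \<in> Pow (all_edges n)"
    then obtain G Y where "G \<in> \<F>" "X = sym_diff G Y"
        "Y = {} \<or> Y \<subseteq> all_edges n \<and> \<not> contains_subgraph Y n m LE"
      using maximum_separating_family_covers[OF \<F>] by blast
    then show "X \<in> (\<lambda>(G, Y). sym_diff G Y) ` (\<F> \<times> insert {} ?bad)" by force
  qed
  then have "card (Pow (all_edges n)) \<le> card ((\<lambda>(G, Y). sym_diff G Y) ` (\<F> \<times> insert {} ?bad))"
    using fin by (intro card_mono) auto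
  also have "\<dots> \<le> card (\<F> \<times> insert {} ?bad)"
    using fin by (intro card_image_le) auto
  also have "\<dots> \<le> card \<F> * (card ?bad + 1)"
    using fin by (simp add: card_cartesian_product card_insert_if)
  finally show ?thesis using \<F>(3) finite_all_edges by (simp add: card_Pow)
qed

section \<open>Dense graphs contain L\<close>

lemma power_sum_degrees_ge:
  fixes \<alpha> :: real
  assumes "n \<ge> 2" "0 < \<alpha>" "H \<subseteq> all_edges n" "\<alpha> * real (n choose 2) \<le> real (card H)"
  shows "(\<alpha>/4) ^ (t+1) * real n ^ (t+1) \<le> (\<Sum>v\<in>{1..n}. real (card {s\<in>{1..n}. {s, v} \<in> H}) ^ t)"
proof -
  let ?V = "{1..n}"
  let ?deg = "\<lambda>v. card {s\<in>?V. {s, v} \<in> H}"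
  have deg_le: "?deg v \<le> n" for v
  proof -
    have "?deg v \<le> card ?V" by (rule card_mono) auto
    then show ?thesis by simp
  qed
  have "graph_on ?V H" using \<open>H \<subseteq> all_edges n\<close> graph_on_iff_subset_all_edges by blast
  have "\<alpha> * real n * (real n - 1) = \<alpha> * (2 * real (n choose 2))"
    by (simp only: two_mult_choose_two mult.assoc)
  also have "\<dots> \<le> (\<Sum>v\<in>?V. real (?deg v))"
    using sum_degrees_eq_twice_card_edges[OF \<open>graph_on ?V H\<close>] assms(4)
    by (simp flip: of_nat_sum)
  finally show ?thesis
    using \<open>n \<ge> 2\<close> \<open>0 < \<alpha>\<close> deg_le by (intro power_sum_lower_bound) auto
qed

definition density_forces_subgraph :: "real \<Rightarrow> nat set set \<Rightarrow> nat \<Rightarrow> nat \<Rightarrow> bool" where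
  "density_forces_subgraph \<alpha> LE m n \<longleftrightarrow>
     (\<forall>H. H \<subseteq> all_edges n \<longrightarrow> \<alpha> * real (n choose 2) \<le> real (card H) \<longrightarrow> contains_subgraph H n m LE)"

lemma density_forces_subgraph_if_drc_condition:
  fixes \<alpha> :: real
  assumes L: "graph_on {0..<m} LE" "bipartition {0..<m} LE A B"
    "\<And>a. a \<in> A \<Longrightarrow> card {b \<in> B. {a, b} \<in> LE} \<le> r"
    and "n \<ge> 2" "0 < \<alpha>"
    and drc: "real (r + 1) * real n ^ r * real m ^ t + real m * real n ^ t
                \<le> (\<alpha>/4) ^ (t+1) * real n ^ (t+1)"
  shows "density_forces_subgraph \<alpha> LE m n"
  unfolding density_forces_subgraph_def
proof (intro allI impI)
  fix H assume H: "H \<subseteq> all_edges n" "\<alpha> * real (n choose 2) \<le> real (card H)"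
  let ?V = "{1..n}"
  define bad where "bad = {S. S \<subseteq> ?V \<and> card S \<le> r \<and> card (common_nbhd H ?V S) < m}"
  have "card bad \<le> (r + 1) * n ^ r"
    using card_mono[of "{S. S \<subseteq> ?V \<and> card S \<le> r}" bad] card_small_subsets_le[of ?V r] \<open>n \<ge> 2\<close>
    unfolding bad_def by fastforce
  then have "real (card bad) \<le> real (r + 1) * real n ^ r"
    by (metis of_nat_le_iff of_nat_mult of_nat_power)
  then have "real (card bad) * real m ^ t \<le> real (r + 1) * real n ^ r * real m ^ t"
    by (rule mult_right_mono) simp
  then have "real (card bad * m ^ t + m * card ?V ^ t) \<le> real (\<Sum>v\<in>?V. card {s\<in>?V. {s, v} \<in> H} ^ t)"
    using drc power_sum_degrees_ge[OF \<open>n \<ge> 2\<close> \<open>0 < \<alpha>\<close> H, of t] by simp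
  then obtain U where "U \<subseteq> ?V" "m \<le> card U" "rich_subset H ?V r m U"
    using dependent_random_choice[of ?V r H m t] \<open>n \<ge> 2\<close> unfolding bad_def of_nat_le_iff by auto
  then show "contains_subgraph H n m LE" using contains_subgraph_if_rich_subset[OF L] by blast
qed

lemma power_le_of_sublinear:
  fixes x y C \<epsilon> :: real
  assumes "1 \<le> x" "0 \<le> y" "y \<le> C * x powr (1 - \<epsilon>)" "real r \<le> \<epsilon> * real t"
  shows "x ^ r * y ^ t \<le> C ^ t * x ^ t"
proof -
  have "x ^ r * y ^ t \<le> x powr (\<epsilon> * real t) * (C * x powr (1 - \<epsilon>)) ^ t"
    using assms by (intro mult_mono power_mono) (auto simp: powr_mono simp flip: powr_realpow)
  also have "\<dots> = C ^ t * x powr (\<epsilon> * real t + (1 - \<epsilon>) * real t)"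
    using assms(1) by (simp add: power_mult_distrib powr_add powr_powr flip: powr_realpow)
  also have "\<dots> = C ^ t * x ^ t"
    using assms(1) by (simp add: algebra_simps powr_realpow)
  finally show ?thesis .
qed

lemma eventually_sublinear_lt:
  fixes K C c \<epsilon> :: real
  assumes "0 < c" "0 < \<epsilon>"
  shows "eventually (\<lambda>n::nat. K + C * real n powr (1 - \<epsilon>) < c * real n) sequentially"
proof -
  have "(\<lambda>n::nat. K / real n + C * real n powr (- \<epsilon>)) \<longlonglongrightarrow> 0 + C * 0"
    using assms(2)
    by (intro tendsto_add tendsto_mult lim_const_over_n tendsto_const tendsto_neg_powr)
       (simp_all add: filterlim_real_sequentially)
  then have "eventually (\<lambda>n::nat. K / real n + C * real n powr (- \<epsilon>) < c) sequentially"
    using assms(1) by (simp add: order_tendstoD(2))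
  then show ?thesis using eventually_gt_at_top[of 0]
  proof eventually_elim
    case (elim n)
    then have "real n * (K / real n + C * real n powr (- \<epsilon>)) < real n * c" by simp
    moreover have "real n powr (1 - \<epsilon>) = real n * real n powr (- \<epsilon>)"
      using elim(2) by (simp add: powr_diff powr_minus divide_inverse)
    ultimately show ?case using elim(2) by (simp add: algebra_simps)
  qed
qed

lemma eventually_drc_condition:
  fixes \<epsilon> c C :: real and m :: "nat \<Rightarrow> nat"
  assumes "0 < \<epsilon>" "0 < c" "real r \<le> \<epsilon> * real t"
    and m: "eventually (\<lambda>n. real (m n) \<le> C * real n powr (1 - \<epsilon>)) sequentially"
  shows "eventually (\<lambda>n. real (r + 1) * real n ^ r * real (m n) ^ t + real (m n) * real n ^ t
                         \<le> c * real n ^ (t+1)) sequentially"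
  using m eventually_sublinear_lt[OF assms(2,1), of "real (r + 1) * C ^ t" C] eventually_gt_at_top[of 0]
proof eventually_elim
  case (elim n)
  have "real n ^ r * real (m n) ^ t \<le> C ^ t * real n ^ t"
    using elim(1,3) assms(3) by (intro power_le_of_sublinear) auto
  then have "real (r + 1) * real n ^ r * real (m n) ^ t + real (m n) * real n ^ t
      \<le> real (r + 1) * (C ^ t * real n ^ t) + C * real n powr (1 - \<epsilon>) * real n ^ t"
    using elim(1) by (intro add_mono mult_right_mono) (simp_all add: mult.assoc)
  also have "\<dots> = (real (r + 1) * C ^ t + C * real n powr (1 - \<epsilon>)) * real n ^ t"
    by (simp add: algebra_simps)
  also have "\<dots> \<le> c * real n * real n ^ t"
    using elim(2) by (intro mult_right_mono) auto
  finally show ?case by simp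
qed

lemma eventually_density_forces_subgraph:
  fixes \<epsilon> \<alpha> C :: real and m :: "nat \<Rightarrow> nat"
  assumes "0 < \<epsilon>" "0 < \<alpha>"
    and "\<And>n. graph_on {0..<m n} (LE n)"
    and "\<And>n. bipartition {0..<m n} (LE n) (A n) (B n)"
    and "\<And>n a. a \<in> A n \<Longrightarrow> card {b \<in> B n. {a, b} \<in> LE n} \<le> r"
    and "eventually (\<lambda>n. real (m n) \<le> C * real n powr (1 - \<epsilon>)) sequentially"
  shows "eventually (\<lambda>n. density_forces_subgraph \<alpha> (LE n) (m n) n) sequentially"
proof -
  \<comment> \<open>this choice of \<open>t\<close> makes \<open>n^r m^t \<le> C^t n^t\<close>\<close>
  define t where "t = nat \<lceil>real r / \<epsilon>\<rceil>"
  have "real r / \<epsilon> \<le> real t" unfolding t_def by linarith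
  then have "real r \<le> \<epsilon> * real t" using \<open>0 < \<epsilon>\<close> by (simp add: field_simps)
  with assms(1,2,6) have "eventually (\<lambda>n. n \<ge> 2 \<and> real (r + 1) * real n ^ r * real (m n) ^ t
      + real (m n) * real n ^ t \<le> (\<alpha>/4) ^ (t+1) * real n ^ (t+1)) sequentially"
    by (intro eventually_conj eventually_ge_at_top eventually_drc_condition) auto
  then show ?thesis
    by eventually_elim (blast intro: density_forces_subgraph_if_drc_condition[OF assms(3-5)] \<open>0 < \<alpha>\<close>)
qed

lemma log_M_L_le:
  assumes "n \<ge> 2"
  shows "log 2 (real (M_L LE m n)) / real (n choose 2) \<le> 1"
proof -
  have "real (M_L LE m n) \<le> 2 ^ card (all_edges n)"
    using M_L_le_two_pow by (metis of_nat_le_iff of_nat_numeral of_nat_power)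
  then have "log 2 (real (M_L LE m n)) \<le> log 2 (2 ^ card (all_edges n))"
    using M_L_pos by (subst log_le_cancel_iff) auto
  also have "\<dots> = real (n choose 2)" by (simp add: card_all_edges)
  finally show ?thesis using assms by (simp add: divide_le_eq_1)
qed

lemma two_pow_le_M_L_exp:
  fixes \<alpha> :: real
  assumes "0 < \<alpha>" "\<alpha> \<le> 1" "n \<ge> 2"
    and dense: "density_forces_subgraph \<alpha> LE m n"
  shows "2 ^ (n choose 2) * \<alpha> powr (\<alpha> * real (n choose 2))
           \<le> 2 * real (M_L LE m n) * exp (\<alpha> * real (n choose 2))"
proof -
  let ?N = "real (n choose 2)"
  let ?bad = "{X \<in> Pow (all_edges n). \<not> contains_subgraph X n m LE}"
  let ?small = "{X \<in> Pow (all_edges n). real (card X) < \<alpha> * ?N}"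
  have fin: "finite ?small" using finite_all_edges by simp
  have "?bad \<subseteq> ?small"
  proof
    fix X assume "X \<in> ?bad"
    then have "X \<subseteq> all_edges n" "\<not> contains_subgraph X n m LE" by auto
    then have "\<not> \<alpha> * ?N \<le> real (card X)" using dense unfolding density_forces_subgraph_def by blast
    then show "X \<in> ?small" using \<open>X \<subseteq> all_edges n\<close> by simp
  qed
  then have "card ?bad \<le> card ?small" using fin by (rule card_mono[rotated])
  moreover have "0 < ?N" using \<open>n \<ge> 2\<close> by simp
  then have "{} \<in> ?small" using \<open>0 < \<alpha>\<close> by simp
  then have "0 < card ?small" using fin card_gt_0_iff by blast
  ultimately have "card ?bad + 1 \<le> 2 * card ?small" by linarith
  have "2 ^ (n choose 2) \<le> M_L LE m n * (card ?bad + 1)"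
    using two_pow_le_M_L_mult[of n LE m] by (simp only: card_all_edges)
  also have "\<dots> \<le> M_L LE m n * (2 * card ?small)"
    using \<open>card ?bad + 1 \<le> 2 * card ?small\<close> by (rule mult_le_mono2)
  finally have "real (2 ^ (n choose 2)) \<le> real (M_L LE m n * (2 * card ?small))"
    by (simp only: of_nat_le_iff)
  then have two_pow_le: "2 ^ (n choose 2) \<le> 2 * real (M_L LE m n) * real (card ?small)"
    by simp
  have "2 ^ (n choose 2) * \<alpha> powr (\<alpha> * ?N)
      \<le> 2 * real (M_L LE m n) * (real (card ?small) * \<alpha> powr (\<alpha> * ?N))"
    using mult_right_mono[OF two_pow_le, of "\<alpha> powr (\<alpha> * ?N)"] by (simp add: mult.assoc)
  also have "\<dots> \<le> 2 * real (M_L LE m n) * exp (\<alpha> * ?N)"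
    using card_Pow_small_bound[OF finite_all_edges[of n] assms(1,2), where K = "\<alpha> * ?N"]
    by (intro mult_left_mono) (simp_all add: card_all_edges)
  finally show ?thesis .
qed

lemma log_M_L_ge:
  fixes \<alpha> :: real
  assumes "0 < \<alpha>" "\<alpha> \<le> 1" "n \<ge> 2"
    and "density_forces_subgraph \<alpha> LE m n"
  shows "1 - 1 / real (n choose 2) - \<alpha> * (1 - ln \<alpha>) / ln 2
           \<le> log 2 (real (M_L LE m n)) / real (n choose 2)"
proof -
  let ?N = "real (n choose 2)" and ?M = "real (M_L LE m n)"
  have "0 < ?N" using assms(3) by simp
  have "0 < ?M" using M_L_pos by simp
  have "ln (2 ^ (n choose 2) * \<alpha> powr (\<alpha> * ?N)) \<le> ln (2 * ?M * exp (\<alpha> * ?N))"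
    using two_pow_le_M_L_exp[OF assms] \<open>0 < \<alpha>\<close> \<open>0 < ?M\<close> by (subst ln_le_cancel_iff) auto
  then have "?N * ln 2 + \<alpha> * ?N * ln \<alpha> \<le> ln 2 + ln ?M + \<alpha> * ?N"
    using \<open>0 < \<alpha>\<close> \<open>0 < ?M\<close> by (simp add: ln_mult ln_realpow ln_powr)
  moreover have "(1 - 1 / ?N - \<alpha> * (1 - ln \<alpha>) / ln 2) * (?N * ln 2)
      = ?N * ln 2 - ln 2 - \<alpha> * ?N * (1 - ln \<alpha>)"
    using \<open>0 < ?N\<close> by (simp add: field_simps)
  ultimately have "(1 - 1 / ?N - \<alpha> * (1 - ln \<alpha>) / ln 2) * (?N * ln 2) \<le> ln ?M"
    by (simp add: algebra_simps)
  then have "1 - 1 / ?N - \<alpha> * (1 - ln \<alpha>) / ln 2 \<le> ln ?M / (?N * ln 2)"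
    using \<open>0 < ?N\<close> by (simp add: pos_le_divide_eq)
  also have "\<dots> = log 2 ?M / ?N" by (simp add: log_def)
  finally show ?thesis .
qed

lemma dist_log_M_L_one_le:
  fixes \<alpha> :: real
  assumes "0 < \<alpha>" "\<alpha> \<le> 1" "n \<ge> 2"
    and "density_forces_subgraph \<alpha> LE m n"
  shows "dist (log 2 (real (M_L LE m n)) / real (n choose 2)) 1
           \<le> 1 / real (n choose 2) + \<alpha> * (1 - ln \<alpha>) / ln 2"
  using log_M_L_le[OF assms(3)] log_M_L_ge[OF assms] by (simp add: dist_real_def)

lemma exists_small_entropy_weight:
  fixes e :: real
  assumes "0 < e"
  obtains \<alpha> where "0 < \<alpha>" "\<alpha> \<le> 1" "\<alpha> * (1 - ln \<alpha>) / ln 2 < e"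
proof -
  have "((\<lambda>\<alpha>::real. \<alpha> * (1 - ln \<alpha>) / ln 2) \<longlongrightarrow> 0) (at_right 0)" by real_asymp
  then have "eventually (\<lambda>\<alpha>. \<alpha> * (1 - ln \<alpha>) / ln 2 < e) (at_right 0)"
    using assms by (rule order_tendstoD)
  moreover have "eventually (\<lambda>\<alpha>. 0 < \<alpha> \<and> \<alpha> \<le> (1::real)) (at_right 0)"
    unfolding eventually_at_right_field by (intro exI[of _ 1]) auto
  ultimately have "eventually (\<lambda>\<alpha>. 0 < \<alpha> \<and> \<alpha> \<le> 1 \<and> \<alpha> * (1 - ln \<alpha>) / ln 2 < e) (at_right 0)"
    by eventually_elim auto
  then show ?thesis using that eventually_happens'[OF trivial_limit_at_right_real] by blast
qed

lemma inverse_choose_two_tendsto_zero: "(\<lambda>n. 1 / real (n choose 2)) \<longlonglongrightarrow> 0"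
proof -
  have "(\<lambda>n. 2 / (real n * (real n - 1))) \<longlonglongrightarrow> 0" by real_asymp
  then show ?thesis by (simp flip: two_mult_choose_two)
qed

theorem theorem1p6:
  fixes r :: nat and \<epsilon> :: real
    and m :: "nat \<Rightarrow> nat" and LE :: "nat \<Rightarrow> nat set set" and A B :: "nat \<Rightarrow> nat set"
  assumes "r > 0" and "\<epsilon> > 0"
    and "\<And>n. graph_on {0..<m n} (LE n)"
    and "\<And>n. connected_graph {0..<m n} (LE n)"
    and "\<And>n. bipartition {0..<m n} (LE n) (A n) (B n)"
    and "\<And>n a. a \<in> A n \<Longrightarrow> card {b \<in> B n. {a, b} \<in> LE n} \<le> r"
    and "(\<lambda>n. real (m n)) \<in> O(\<lambda>n. real n powr (1 - \<epsilon>))"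
  shows "(\<lambda>n. log 2 (real (M_L (LE n) (m n) n)) / real (n choose 2)) \<longlonglongrightarrow> 1"
proof (rule tendstoI)
  fix e :: real
  assume "0 < e"
  obtain C where "eventually (\<lambda>n. real (m n) \<le> C * real n powr (1 - \<epsilon>)) sequentially"
    using assms(7) by (elim landau_o.bigE) (auto elim: eventually_mono)
  moreover obtain \<alpha> where \<alpha>: "0 < \<alpha>" "\<alpha> \<le> 1" "\<alpha> * (1 - ln \<alpha>) / ln 2 < e / 2"
    using exists_small_entropy_weight[of "e / 2"] \<open>0 < e\<close> by auto
  ultimately have "eventually (\<lambda>n. density_forces_subgraph \<alpha> (LE n) (m n) n) sequentially"
    using assms(2,3,5,6) by (intro eventually_density_forces_subgraph) auto
  moreover have "eventually (\<lambda>n. 1 / real (n choose 2) < e / 2) sequentially"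
    using order_tendstoD(2)[OF inverse_choose_two_tendsto_zero, of "e / 2"] \<open>0 < e\<close> by simp
  ultimately show "eventually (\<lambda>n. dist (log 2 (real (M_L (LE n) (m n) n)) / real (n choose 2)) 1 < e)
      sequentially"
    using eventually_ge_at_top[of 2]
  proof eventually_elim
    case (elim n)
    show ?case using dist_log_M_L_one_le[OF \<alpha>(1,2) elim(3,1)] elim(2) \<alpha>(3) by linarith
  qed
qed

end
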